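(* Let $K$ be a strength measure. Then for every bipartite Hamiltonian $H$, $K(H)\ge0$, with $K(H)=0$ if and only if $H$ is local.
   Context: All Hamiltonians are Hermitian operators on finite-dimensional Hilbert spaces. A bipartite Hamiltonian acts on $\mathcal H_A\otimes\mathcal H_B$, with system $A$ held by Alice and $B$ by Bob; it is local if it has the form $H_A\otimes I_B+I_A\otimes H_B$ and nonlocal otherwise. Simulation model: Alice and Bob may attach local ancillas, apply arbitrary instantaneous local unitaries, and switch $H$ on for chosen times, to track (stroboscopically, for arbitrarily fine times) the evolution $e^{-iH't}$; the simulation rate $\gamma_{H'|H}$ is the supremum of $\gamma\ge0$ such that evolution under $H'$ for time $t$ is achievable using $H$ for total time $t/\gamma$. Local Hamiltonians can be produced at no cost (so $\gamma_{H_0|H}=\infty$ for local $H_0$), a local Hamiltonian cannot simulate a nonlocal one ($\gamma_{H|H_0}=0$), and (known fact) every nonlocal bipartite Hamiltonian can simulate every bounded bipartite Hamiltonian at a strictly positive rate. A strength measure is a function $K$ from bipartite Hamiltonians (on arbitrary finite dimensions) to $\mathbb R\cup\{\pm\infty\}$ that is finite on every Hamiltonian, not identically zero, and satisfies the monotonicity axiom $K(H)\ge\gamma_{H'|H}K(H')$ for all $H,H'$. *)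

theory Defs
  imports "Jordan_Normal_Form.Matrix" "HOL-Library.Extended_Real"
begin

definition herm :: "nat \<Rightarrow> complex mat \<Rightarrow> bool" where
  "herm n A \<longleftrightarrow> A \<in> carrier_mat n n \<and>
     (\<forall>i<n. \<forall>j<n. A $$ (i, j) = cnj (A $$ (j, i)))"

text \<open>Kronecker (tensor) product; basis vector |a> (x) |b> has index a * dim_B + b.\<close>
definition kron :: "complex mat \<Rightarrow> complex mat \<Rightarrow> complex mat" where
  "kron A B = mat (dim_row A * dim_row B) (dim_col A * dim_col B)
     (\<lambda>(i, j). A $$ (i div dim_row B, j div dim_col B) * B $$ (i mod dim_row B, j mod dim_col B))"

text \<open>A bipartite Hamiltonian is a triple (dA, dB, H): H Hermitian on C^dA (x) C^dB.\<close>
type_synonym bham = "nat \<times> nat \<times> complex mat"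

definition bipartite_ham :: "bham \<Rightarrow> bool" where
  "bipartite_ham X = (case X of (dA, dB, H) \<Rightarrow> dA \<ge> 1 \<and> dB \<ge> 1 \<and> herm (dA * dB) H)"

definition local_ham :: "bham \<Rightarrow> bool" where
  "local_ham X = (case X of (dA, dB, H) \<Rightarrow>
     bipartite_ham X \<and> (\<exists>HA HB. herm dA HA \<and> herm dB HB \<and>
        H = kron HA (1\<^sub>m dB) + kron (1\<^sub>m dA) HB))"

definition nonlocal_ham :: "bham \<Rightarrow> bool" where
  "nonlocal_ham X \<longleftrightarrow> bipartite_ham X \<and> \<not> local_ham X"

text \<open>Strength measure relative to a simulation-rate function gamma, where
  gamma H' H is the rate gamma_{H'|H} of simulating H' using H.\<close>
definition strength_measure :: "(bham \<Rightarrow> bham \<Rightarrow> ereal) \<Rightarrow> (bham \<Rightarrow> ereal) \<Rightarrow> bool" where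
  "strength_measure gamma K \<longleftrightarrow>
     (\<forall>H. bipartite_ham H \<longrightarrow> \<bar>K H\<bar> \<noteq> \<infinity>) \<and>
     (\<exists>H. bipartite_ham H \<and> K H \<noteq> 0) \<and>
     (\<forall>H H'. bipartite_ham H \<longrightarrow> bipartite_ham H' \<longrightarrow> K H \<ge> gamma H' H * K H')"

end

theory Submission
  imports Defs
begin

text \<open>Compare a local \<open>H\<^sub>0\<close> with a nonlocal \<open>N\<close>: monotonicity gives
  \<open>K H\<^sub>0 \<ge> 0 \<cdot> K N = 0\<close> and \<open>K N \<ge> \<infinity> \<cdot> K H\<^sub>0\<close>, so finiteness of \<open>K N\<close> forces
  \<open>K H\<^sub>0 = 0\<close>. Then every \<open>H\<close> has \<open>K H \<ge> \<gamma> \<cdot> K H\<^sub>0 = 0\<close>. Some \<open>H'\<close> has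
  \<open>K H' \<noteq> 0\<close>, hence \<open>K H' > 0\<close>, and every nonlocal \<open>H\<close> simulates it at a positive rate,
  so \<open>K H \<ge> \<gamma> \<cdot> K H' > 0\<close>. A nonlocal Hamiltonian exists: the diagonal of a local one
  has the additive form \<open>a\<^sub>i + b\<^sub>j\<close>, which the diagonal \<open>(1, -1, -1, 1)\<close> of
  \<open>\<sigma>\<^sub>z \<otimes> \<sigma>\<^sub>z\<close> violates.\<close>

lemma local_ham_imp_bipartite_ham: "local_ham H \<Longrightarrow> bipartite_ham H"
  by (auto simp: local_ham_def split: prod.splits)

lemma nonlocal_ham_imp_bipartite_ham: "nonlocal_ham H \<Longrightarrow> bipartite_ham H"
  by (simp add: nonlocal_ham_def)

lemma bipartite_ham_cases:
  assumes "bipartite_ham H"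
  obtains (local) "local_ham H" | (nonlocal) "nonlocal_ham H"
  using assms by (auto simp: nonlocal_ham_def)

lemma local_ham_zero:
  assumes "dA \<ge> 1" "dB \<ge> 1"
  shows "local_ham (dA, dB, 0\<^sub>m (dA * dB) (dA * dB))"
proof -
  have "0\<^sub>m (dA * dB) (dA * dB) = kron (0\<^sub>m dA dA) (1\<^sub>m dB) + kron (1\<^sub>m dA) (0\<^sub>m dB dB)"
    using assms by (intro eq_matI) (auto simp: kron_def less_mult_imp_div_less)
  moreover have "herm n (0\<^sub>m n n)" for n
    by (simp add: herm_def)
  ultimately show ?thesis
    using assms unfolding local_ham_def bipartite_ham_def prod.case by blast
qed

lemma diag_kron_local:
  assumes "HA \<in> carrier_mat dA dA" "HB \<in> carrier_mat dB dB" "a < dA" "b < dB"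
  shows "(kron HA (1\<^sub>m dB) + kron (1\<^sub>m dA) HB) $$ (a * dB + b, a * dB + b)
    = HA $$ (a, a) + HB $$ (b, b)"
proof -
  have "a * dB + b < (a + 1) * dB"
    using assms(4) by simp
  also have "\<dots> \<le> dA * dB"
    using assms(3) by (intro mult_right_mono) auto
  finally show ?thesis
    using assms by (simp add: kron_def)
qed

lemma local_ham_diag:
  assumes "local_ham (dA, dB, H)"
  obtains HA HB where
    "\<And>a b. a < dA \<Longrightarrow> b < dB \<Longrightarrow> H $$ (a * dB + b, a * dB + b) = HA $$ (a, a) + HB $$ (b, b)"
proof -
  from assms obtain HA HB where "herm dA HA" "herm dB HB"
    and H: "H = kron HA (1\<^sub>m dB) + kron (1\<^sub>m dA) HB"
    by (auto simp: local_ham_def)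
  then have "HA \<in> carrier_mat dA dA" "HB \<in> carrier_mat dB dB"
    by (simp_all add: herm_def)
  with H diag_kron_local show thesis
    by (intro that[of HA HB]) blast
qed

lemma local_ham_diag_exchange:
  assumes "local_ham (dA, dB, H)" "a < dA" "a' < dA" "b < dB" "b' < dB"
  shows "H $$ (a * dB + b, a * dB + b) + H $$ (a' * dB + b', a' * dB + b')
    = H $$ (a * dB + b', a * dB + b') + H $$ (a' * dB + b, a' * dB + b)"
proof -
  obtain HA HB where diag:
    "\<And>a b. a < dA \<Longrightarrow> b < dB \<Longrightarrow> H $$ (a * dB + b, a * dB + b) = HA $$ (a, a) + HB $$ (b, b)"
    using local_ham_diag[OF assms(1)] by blast
  show ?thesis
    using diag[of a b] diag[of a' b'] diag[of a b'] diag[of a' b] assms(2-) by simp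
qed

definition zz_ham :: bham where
  "zz_ham = (2, 2, mat 4 4 (\<lambda>(i, j). if i = j then if i = 0 \<or> i = 3 then 1 else -1 else 0))"

lemma nonlocal_zz_ham: "nonlocal_ham zz_ham"
proof -
  let ?H = "mat 4 4 (\<lambda>(i, j). if i = j then if i = 0 \<or> i = 3 then 1 else -1 else 0) :: complex mat"
  have "bipartite_ham zz_ham"
    by (simp add: zz_ham_def bipartite_ham_def herm_def)
  moreover have "\<not> local_ham (2, 2, ?H)"
  proof
    assume "local_ham (2, 2, ?H)"
    from local_ham_diag_exchange[OF this, of 0 1 0 1]
    show False by simp
  qed
  ultimately show ?thesis
    by (simp add: nonlocal_ham_def zz_ham_def)
qed

lemma strength_measure_finite:
  "strength_measure gamma K \<Longrightarrow> bipartite_ham H \<Longrightarrow> \<bar>K H\<bar> \<noteq> \<infinity>"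
  by (simp add: strength_measure_def del: split_paired_All split_paired_Ex)

lemma strength_measure_nontrivial:
  "strength_measure gamma K \<Longrightarrow> \<exists>H. bipartite_ham H \<and> K H \<noteq> 0"
  by (simp add: strength_measure_def del: split_paired_All split_paired_Ex)

lemma strength_measure_mono:
  "strength_measure gamma K \<Longrightarrow> bipartite_ham H \<Longrightarrow> bipartite_ham H' \<Longrightarrow>
    gamma H' H * K H' \<le> K H"
  by (simp add: strength_measure_def del: split_paired_All split_paired_Ex)

lemma strength_measure_eq_0:
  assumes K: "strength_measure gamma K"
    and H: "bipartite_ham H" and N: "bipartite_ham N"
    and "gamma N H = 0" and "gamma H N = \<infinity>"
  shows "K H = 0"
proof -
  have "K H \<ge> 0"
    using strength_measure_mono[OF K H N] \<open>gamma N H = 0\<close> by simp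
  moreover have "\<infinity> * K H \<le> K N"
    using strength_measure_mono[OF K N H] \<open>gamma H N = \<infinity>\<close> by simp
  moreover have "\<not> K H > 0"
  proof
    assume "K H > 0"
    then have "\<infinity> * K H = \<infinity>"
      by (cases "K H") auto
    with \<open>\<infinity> * K H \<le> K N\<close> have "K N = \<infinity>"
      by simp
    with strength_measure_finite[OF K N] show False
      by simp
  qed
  ultimately show ?thesis
    by simp
qed

lemma strength_measure_nonneg:
  assumes K: "strength_measure gamma K"
    and H: "bipartite_ham H" and Z: "bipartite_ham Z" "K Z = 0"
  shows "K H \<ge> 0"
  using strength_measure_mono[OF K H Z(1)] Z(2) by simp

lemma strength_measure_pos:
  assumes K: "strength_measure gamma K"
    and H: "bipartite_ham H" and H': "bipartite_ham H'" "K H' > 0"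
    and "gamma H' H > 0"
  shows "K H > 0"
proof -
  have "gamma H' H * K H' > 0"
    using \<open>gamma H' H > 0\<close> \<open>K H' > 0\<close> by (simp add: ereal_zero_less_0_iff)
  also have "\<dots> \<le> K H"
    using strength_measure_mono[OF K H H'(1)] .
  finally show ?thesis .
qed

theorem mainTheorem11:
  fixes gamma :: "bham \<Rightarrow> bham \<Rightarrow> ereal" and K :: "bham \<Rightarrow> ereal"
  assumes gamma_nonneg: "\<And>H H'. bipartite_ham H \<Longrightarrow> bipartite_ham H' \<Longrightarrow> gamma H' H \<ge> 0"
    and local_free: "\<And>H0 H. local_ham H0 \<Longrightarrow> bipartite_ham H \<Longrightarrow> gamma H0 H = \<infinity>"
    and local_cannot: "\<And>H0 H. local_ham H0 \<Longrightarrow> nonlocal_ham H \<Longrightarrow> gamma H H0 = 0"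
    and nonlocal_universal: "\<And>H H'. nonlocal_ham H \<Longrightarrow> bipartite_ham H' \<Longrightarrow> gamma H' H > 0"
    and K: "strength_measure gamma K"
  shows "\<forall>H. bipartite_ham H \<longrightarrow> K H \<ge> 0 \<and> (K H = 0 \<longleftrightarrow> local_ham H)"
proof -
  have N: "nonlocal_ham zz_ham" "bipartite_ham zz_ham"
    using nonlocal_zz_ham nonlocal_ham_imp_bipartite_ham by blast+
  have local_eq_0: "K H = 0" if "local_ham H" for H
    using strength_measure_eq_0[OF K local_ham_imp_bipartite_ham[OF that] N(2)]
      local_cannot[OF that N(1)] local_free[OF that N(2)] by simp
  have Z: "local_ham (1, 1, 0\<^sub>m 1 1)"
    using local_ham_zero[of 1 1] by simp
  have nonneg: "K H \<ge> 0" if "bipartite_ham H" for H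
    using strength_measure_nonneg[OF K that local_ham_imp_bipartite_ham[OF Z] local_eq_0[OF Z]] .
  obtain H' where H': "bipartite_ham H'" "K H' \<noteq> 0"
    using strength_measure_nontrivial[OF K] by blast
  have "K H' > 0"
    using nonneg[OF H'(1)] H'(2) by simp
  have nonlocal_pos: "K H > 0" if "nonlocal_ham H" for H
    using strength_measure_pos[OF K nonlocal_ham_imp_bipartite_ham[OF that] H'(1) \<open>K H' > 0\<close>]
      nonlocal_universal[OF that H'(1)] .
  show ?thesis
  proof (intro allI impI conjI)
    fix H
    assume H: "bipartite_ham H"
    then show "K H \<ge> 0"
      by (rule nonneg)
    from H show "K H = 0 \<longleftrightarrow> local_ham H"
    proof (cases rule: bipartite_ham_cases)
      case local
      then show ?thesis
        by (simp add: local_eq_0)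
    next
      case nonlocal
      then have "K H > 0" and "\<not> local_ham H"
        by (simp_all add: nonlocal_pos nonlocal_ham_def)
      then show ?thesis
        by simp
    qed
  qed
qed

end
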